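(* For $k\ge1$, let $\alpha(k)$ be the smallest integer $n$ such that there is a string of length $n$ whose Manacher array (of length $2n-1$) is not the Manacher array of any string with fewer than $k$ distinct symbols. Then $\alpha(1)=1$ and $\alpha(k)=2^{k-2}+1$ for all $k\ge2$. Equivalently, for $n\ge2$, every Manacher array of a string of length $n$ is realized by a string with at most $\lfloor\log_2(n-1)\rfloor+2$ distinct symbols, and this bound is attained for every such $n$.
   Context: The Manacher array of a string $S$ of length $n$ is the array $\mathsf A[1..2n-1]$: $\mathsf A[2k-1]$ is the largest $r\ge0$ with $1\le k-r$, $k+r\le n$ and $S[k-r..k+r]$ a palindrome; $\mathsf A[2k]$ is the largest $r\ge0$ with $1\le k-r+1$, $k+r\le n$ and $S[k-r+1..k+r]$ a palindrome. *)

theory Defs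
  imports Complex_Main
begin

text \<open>Strings are lists; positions are 1-indexed as in the paper: S[i] = S ! (i-1).
  pal_sub S i j: the factor S[i..j] (inclusive; empty if j < i) is a palindrome.\<close>
definition pal_sub :: "'a list \<Rightarrow> nat \<Rightarrow> nat \<Rightarrow> bool" where
  "pal_sub S i j = (let w = take (j + 1 - i) (drop (i - 1) S) in rev w = w)"

text \<open>A[2k-1]: largest r with 1 \<le> k-r, k+r \<le> n, S[k-r..k+r] palindrome.\<close>
definition man_odd :: "'a list \<Rightarrow> nat \<Rightarrow> nat" where
  "man_odd S k = (GREATEST r. r + 1 \<le> k \<and> k + r \<le> length S \<and> pal_sub S (k - r) (k + r))"

text \<open>A[2k]: largest r with 1 \<le> k-r+1, k+r \<le> n, S[k-r+1..k+r] palindrome.\<close>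
definition man_even :: "'a list \<Rightarrow> nat \<Rightarrow> nat" where
  "man_even S k = (GREATEST r. r \<le> k \<and> k + r \<le> length S \<and> pal_sub S (k + 1 - r) (k + r))"

text \<open>The Manacher array A[1..2n-1], stored as a list whose j-th element (0-based) is A[j+1].\<close>
definition manacher :: "'a list \<Rightarrow> nat list" where
  "manacher S = map (\<lambda>i. if odd i then man_odd S ((i + 1) div 2) else man_even S (i div 2))
                    [1..<2 * length S]"

text \<open>alpha k: smallest n such that some string of length n has a Manacher array not realized by
  any string with fewer than k distinct symbols. Strings over the alphabet nat (w.l.o.g.).\<close>
definition alpha :: "nat \<Rightarrow> nat" where
  "alpha k = (LEAST n. \<exists>S::nat list. length S = n \<and>
      \<not> (\<exists>T::nat list. card (set T) < k \<and> manacher T = manacher S))"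

end

(*
  Two strings have the same Manacher array iff they have the same length and the same
  palindromic factors.

  Upper bound: build T from S letter by letter.  When position i is appended, whether S[a..i] is
  a palindrome depends only on whether S!a = S!i, for the positions a with S[a+1..i-1] a
  palindrome; any two such positions compare in T as in S, so T can copy the letter of a matching
  position, or else take the least letter not used at these positions.  If two such positions
  b < a have palindromes whose lengths differ by less than a factor two, the periodicity of the
  longer palindrome makes the letter at a reappear at 2a - b.  Hence all their letters already
  occur at positions whose palindrome lengths at least double, of which there are at most k when
  i < 2^k, and T only needs the letters 0..k.

  Lower bound: in the ruler string x -> 1 + v_2(x) (with 0 at position 0) every factor strictly
  between consecutive multiples of 2^i is a maximal palindrome.  A string with the same Manacher
  array must therefore give pairwise distinct letters to the positions 2^m and 2^m - 2^j for
  j <= m, i.e. use at least m + 2 letters once its length exceeds 2^m.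
*)
theory Submission
  imports Defs "HOL-Computational_Algebra.Primes"
begin

section \<open>Palindromic factors\<close>

text \<open>Positions are 0-based here, unlike in pal_sub: the factor is \<open>X ! j, ..., X ! (j + len - 1)\<close>.\<close>
definition pal_at :: "'a list \<Rightarrow> nat \<Rightarrow> nat \<Rightarrow> bool" where
  "pal_at X j len \<longleftrightarrow> j + len \<le> length X \<and>
     (\<forall>x y. j \<le> x \<longrightarrow> x < j + len \<longrightarrow> x + y + 1 = 2 * j + len \<longrightarrow> X ! x = X ! y)"

lemma pal_atI:
  "j + len \<le> length X \<Longrightarrow>
   (\<And>x y. j \<le> x \<Longrightarrow> x < j + len \<Longrightarrow> x + y + 1 = 2 * j + len \<Longrightarrow> X ! x = X ! y) \<Longrightarrow>
   pal_at X j len"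
  unfolding pal_at_def by blast

lemma pal_atD:
  "pal_at X j len \<Longrightarrow> j \<le> x \<Longrightarrow> x < j + len \<Longrightarrow> x + y + 1 = 2 * j + len \<Longrightarrow> X ! x = X ! y"
  unfolding pal_at_def by blast

lemma pal_at_length: "pal_at X j len \<Longrightarrow> j + len \<le> length X"
  unfolding pal_at_def by blast

lemma pal_at_short: "j + len \<le> length X \<Longrightarrow> len \<le> 1 \<Longrightarrow> pal_at X j len"
  by (rule pal_atI, simp, rule arg_cong[where f="(!) X"], linarith)

lemma pal_at_iff_rev:
  "pal_at X j len \<longleftrightarrow>
     j + len \<le> length X \<and> rev (take len (drop j X)) = take len (drop j X)"
proof (cases "j + len \<le> length X")
  case True
  define w where "w = take len (drop j X)"
  have w: "length w = len" "\<And>t. t < len \<Longrightarrow> w ! t = X ! (j + t)"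
    using True by (auto simp: w_def)
  have "rev w = w \<longleftrightarrow> (\<forall>t<len. w ! t = w ! (len - Suc t))"
    by (auto simp: list_eq_iff_nth_eq rev_nth w)
  also have "\<dots> \<longleftrightarrow> pal_at X j len"
  proof
    assume mirror: "\<forall>t<len. w ! t = w ! (len - Suc t)"
    show "pal_at X j len"
    proof (rule pal_atI[OF True])
      fix x y assume x: "j \<le> x" "x < j + len" and xy: "x + y + 1 = 2 * j + len"
      then have "y = j + (len - Suc (x - j))" by linarith
      then show "X ! x = X ! y"
        using mirror[rule_format, of "x - j"] w(2)[of "x - j"] w(2)[of "len - Suc (x - j)"] x
        by simp
    qed
  next
    assume pal: "pal_at X j len"
    show "\<forall>t<len. w ! t = w ! (len - Suc t)"
    proof (intro allI impI)
      fix t assume "t < len"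
      then have "X ! (j + t) = X ! (j + (len - Suc t))" by (intro pal_atD[OF pal]) linarith+
      then show "w ! t = w ! (len - Suc t)" using w(2) \<open>t < len\<close> by simp
    qed
  qed
  finally show ?thesis using True by (simp add: w_def)
qed (auto dest: pal_at_length)

lemma pal_sub_eq_pal_at:
  "1 \<le> i \<Longrightarrow> i \<le> j + 1 \<Longrightarrow> j \<le> length S \<Longrightarrow> pal_sub S i j = pal_at S (i - 1) (j + 1 - i)"
  by (simp add: pal_sub_def pal_at_iff_rev Let_def)

lemma pal_at_shrink:
  assumes pal: "pal_at X j len" and "2 * d \<le> len"
  shows "pal_at X (j + d) (len - 2 * d)"
proof (rule pal_atI)
  show "j + d + (len - 2 * d) \<le> length X" using pal_at_length[OF pal] assms(2) by linarith
next
  fix x y assume "j + d \<le> x" "x < j + d + (len - 2 * d)" "x + y + 1 = 2 * (j + d) + (len - 2 * d)"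
  then show "X ! x = X ! y" by (intro pal_atD[OF pal]) (use assms(2) in arith)+
qed

lemma pal_at_Suc2:
  "pal_at X j (len + 2) \<longleftrightarrow>
     j + len + 2 \<le> length X \<and> X ! j = X ! (j + len + 1) \<and> pal_at X (j + 1) len"
proof
  assume pal: "pal_at X j (len + 2)"
  show "j + len + 2 \<le> length X \<and> X ! j = X ! (j + len + 1) \<and> pal_at X (j + 1) len"
    using pal_at_length[OF pal] pal_atD[OF pal, of j] pal_at_shrink[OF pal, of 1] by simp
next
  assume "j + len + 2 \<le> length X \<and> X ! j = X ! (j + len + 1) \<and> pal_at X (j + 1) len"
  then have len: "j + len + 2 \<le> length X" and ends: "X ! j = X ! (j + len + 1)"
    and inner: "pal_at X (j + 1) len" by auto
  show "pal_at X j (len + 2)"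
  proof (rule pal_atI)
    fix x y assume x: "j \<le> x" "x < j + (len + 2)" and xy: "x + y + 1 = 2 * j + (len + 2)"
    consider "x = j" | "x = j + len + 1" | "j + 1 \<le> x" "x < j + 1 + len" using x by linarith
    then show "X ! x = X ! y"
    proof cases
      case 3
      then show ?thesis using pal_atD[OF inner] xy by simp
    qed (use ends xy in auto)
  qed (use len in simp)
qed

lemma pal_at_append:
  "j + len \<le> length X \<Longrightarrow> pal_at (X @ Y) j len \<longleftrightarrow> pal_at X j len"
  by (simp add: pal_at_iff_rev)

text \<open>\<open>q\<close> is where the mirror image of the factor at \<open>p\<close> in the palindrome at \<open>s\<close> starts.\<close>
lemma pal_at_reflect:
  assumes big: "pal_at X s L" and small: "pal_at X p l"
    and inside: "s \<le> p" "p + l \<le> s + L" and q: "q + p + l = 2 * s + L"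
  shows "pal_at X q l"
proof (rule pal_atI)
  show "q + l \<le> length X" using pal_at_length[OF big] inside q by linarith
next
  fix x y assume x: "q \<le> x" "x < q + l" and xy: "x + y + 1 = 2 * q + l"
  define x' where "x' = 2 * s + L - 1 - x"
  define y' where "y' = 2 * p + l - 1 - x'"
  have "X ! x = X ! x'" by (rule pal_atD[OF big]) (use x inside q in \<open>simp_all add: x'_def\<close>)
  also have "\<dots> = X ! y'" by (rule pal_atD[OF small]) (use x inside q in \<open>simp_all add: x'_def y'_def\<close>)
  also have "\<dots> = X ! y" by (rule pal_atD[OF big]) (use x xy inside q in \<open>simp_all add: x'_def y'_def\<close>)
  finally show "X ! x = X ! y" .
qed

section \<open>The Manacher array determines the palindromic factors\<close>

lemma le_Greatest_nat_iff:
  fixes P :: "nat \<Rightarrow> bool"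
  assumes "P 0" "\<And>r. P r \<Longrightarrow> r \<le> b" "\<And>r r'. P r \<Longrightarrow> r' \<le> r \<Longrightarrow> P r'"
  shows "r \<le> Greatest P \<longleftrightarrow> P r"
  using GreatestI_nat[of P 0 b] Greatest_le_nat[of P r b] assms by blast

lemma le_man_odd_iff:
  assumes "1 \<le> k" "k \<le> length S"
  shows "r \<le> man_odd S k \<longleftrightarrow> r < k \<and> k + r \<le> length S \<and> pal_at S (k - r - 1) (2 * r + 1)"
proof -
  define Q where "Q r \<longleftrightarrow> r < k \<and> k + r \<le> length S \<and> pal_at S (k - r - 1) (2 * r + 1)" for r
  have "man_odd S k = Greatest Q"
    unfolding man_odd_def Q_def
    by (intro arg_cong[where f = Greatest] ext conj_cong refl)
      (simp_all add: pal_sub_eq_pal_at mult_2 Suc_le_eq)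
  moreover have "r \<le> Greatest Q \<longleftrightarrow> Q r"
  proof (rule le_Greatest_nat_iff)
    show "Q 0" using assms by (simp add: Q_def pal_at_short)
    show "Q r \<Longrightarrow> r \<le> k" for r by (simp add: Q_def)
    fix r r' assume "Q r" "r' \<le> r"
    moreover have "k - r - 1 + (r - r') = k - r' - 1" "2 * r + 1 - 2 * (r - r') = 2 * r' + 1"
      using calculation by (auto simp: Q_def)
    ultimately show "Q r'"
      using pal_at_shrink[of S "k - r - 1" "2 * r + 1" "r - r'"] by (auto simp: Q_def)
  qed
  ultimately show ?thesis by (simp add: Q_def)
qed

lemma le_man_even_iff:
  assumes "k \<le> length S"
  shows "r \<le> man_even S k \<longleftrightarrow> r \<le> k \<and> k + r \<le> length S \<and> pal_at S (k - r) (2 * r)"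
proof -
  define Q where "Q r \<longleftrightarrow> r \<le> k \<and> k + r \<le> length S \<and> pal_at S (k - r) (2 * r)" for r
  have "man_even S k = Greatest Q"
    unfolding man_even_def Q_def
    by (intro arg_cong[where f = Greatest] ext conj_cong refl)
      (simp_all add: pal_sub_eq_pal_at mult_2 Suc_le_eq)
  moreover have "r \<le> Greatest Q \<longleftrightarrow> Q r"
  proof (rule le_Greatest_nat_iff)
    show "Q 0" using assms by (simp add: Q_def pal_at_short)
    show "Q r \<Longrightarrow> r \<le> k" for r by (simp add: Q_def)
    fix r r' assume "Q r" "r' \<le> r"
    moreover have "k - r + (r - r') = k - r'" "2 * r - 2 * (r - r') = 2 * r'"
      using calculation by (auto simp: Q_def)
    ultimately show "Q r'"
      using pal_at_shrink[of S "k - r" "2 * r" "r - r'"] by (auto simp: Q_def)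
  qed
  ultimately show ?thesis by (simp add: Q_def)
qed

lemma length_manacher: "length (manacher S) = 2 * length S - 1"
  by (simp add: manacher_def)

lemma nth_manacher:
  "e < 2 * length S - 1 \<Longrightarrow>
   manacher S ! e = (if even e then man_odd S (e div 2 + 1) else man_even S ((e + 1) div 2))"
  by (auto simp: manacher_def)

text \<open>Entry \<open>2 * j + len - 1\<close> of the array (0-based) belongs to the centre of the factor.\<close>
lemma pal_at_iff_manacher:
  assumes "0 < len" "j + len \<le> length S"
  shows "pal_at S j len \<longleftrightarrow> len \<le> 2 * manacher S ! (2 * j + len - 1) + len mod 2"
proof (cases "even len")
  case True
  then obtain r where r: "len = 2 * r" by blast
  have "manacher S ! (2 * j + len - 1) = man_even S (j + r)"
    using assms r by (simp add: nth_manacher)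
  then show ?thesis using le_man_even_iff[of "j + r" S r] assms r by auto
next
  case False
  then obtain r where r: "len = 2 * r + 1" using oddE by blast
  have "manacher S ! (2 * j + len - 1) = man_odd S (j + r + 1)"
    using assms r by (simp add: nth_manacher)
  then show ?thesis using le_man_odd_iff[of "j + r + 1" S r] assms r by auto
qed

definition same_pals_upto :: "'a list \<Rightarrow> 'b list \<Rightarrow> nat \<Rightarrow> bool" where
  "same_pals_upto S T i \<longleftrightarrow> (\<forall>j len. j + len \<le> i \<longrightarrow> pal_at S j len = pal_at T j len)"

lemma manacher_eq_iff:
  "manacher S = manacher T \<longleftrightarrow> length S = length T \<and> same_pals_upto S T (length S)"
proof
  assume eq: "manacher S = manacher T"
  then have "2 * length S - 1 = 2 * length T - 1" by (metis length_manacher)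
  then have len: "length S = length T" by arith
  have "pal_at S j len = pal_at T j len" if "j + len \<le> length S" for j len
    using that len eq pal_at_iff_manacher[of len j S] pal_at_iff_manacher[of len j T]
      pal_at_short[of j len S] pal_at_short[of j len T]
    by (cases "len = 0") auto
  then show "length S = length T \<and> same_pals_upto S T (length S)"
    using len by (simp add: same_pals_upto_def)
next
  assume "length S = length T \<and> same_pals_upto S T (length S)"
  then have len: "length S = length T" and pals: "same_pals_upto S T (length S)" by auto
  have sub: "pal_sub S i j = pal_sub T i j" if "1 \<le> i" "i \<le> j + 1" "j \<le> length S" for i j
    using that len pals by (simp add: pal_sub_eq_pal_at same_pals_upto_def)
  have "man_odd S = man_odd T" "man_even S = man_even T"
    unfolding man_odd_def man_even_def
    by (intro ext arg_cong[where f = Greatest] conj_cong refl; simp add: len sub)+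
  then show "manacher S = manacher T" by (simp add: manacher_def len)
qed

section \<open>The ruler string needs many letters\<close>

lemma multiplicity_eq_if_dvd_add:
  fixes p x y :: nat
  assumes sum: "p ^ i dvd x + y" and x: "\<not> p ^ i dvd x"
  shows "multiplicity p y = multiplicity p x"
proof -
  have x0: "x \<noteq> 0" using x by (metis dvd_0_right)
  have p: "\<not> is_unit p" using x is_unit_power_iff unit_imp_dvd by blast
  define e where "e = multiplicity p x"
  have "e < i" unfolding e_def using multiplicity_lessI[OF x0 p x] .
  then have "p ^ e dvd p ^ i" "p ^ Suc e dvd p ^ i"
    by (simp_all only: le_imp_power_dvd Suc_leI less_imp_le)
  then have "p ^ e dvd x + y" "p ^ Suc e dvd x + y" using sum dvd_trans by blast+
  moreover have "p ^ e dvd x" unfolding e_def by (rule multiplicity_dvd)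
  moreover have "\<not> p ^ Suc e dvd x" unfolding e_def using multiplicity_geI[OF x0 p] by fastforce
  ultimately have "p ^ e dvd y" "\<not> p ^ Suc e dvd y" by (metis dvd_add_right_iff add.commute)+
  then show ?thesis unfolding e_def by (rule multiplicity_eqI)
qed

definition ruler :: "nat \<Rightarrow> nat" where
  "ruler x = (if x = 0 then 0 else Suc (multiplicity 2 x))"

definition ruler_string :: "nat \<Rightarrow> nat list" where
  "ruler_string n = map ruler [0..<n]"

lemma ruler_pow2_times_odd: "odd u \<Longrightarrow> ruler (2 ^ e * u) = Suc e"
proof -
  assume u: "odd u"
  have "multiplicity 2 (2 ^ e * u) = e"
  proof (rule multiplicity_eqI)
    show "\<not> 2 ^ Suc e dvd 2 ^ e * u" using u by simp
  qed simp
  then show ?thesis using u by (auto simp: ruler_def odd_pos)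
qed

lemma ruler_window_ends_differ: "ruler (c * 2 ^ i) \<noteq> ruler (Suc c * 2 ^ i)"
proof -
  have deeper: "Suc (Suc i) \<le> ruler (d * 2 ^ i)" if "even d" "d \<noteq> 0" for d
  proof -
    have "2 ^ Suc i dvd d * 2 ^ i" using \<open>even d\<close> by auto
    then have "Suc i \<le> multiplicity 2 (d * 2 ^ i)" using \<open>d \<noteq> 0\<close> by (intro multiplicity_geI) auto
    then show ?thesis using \<open>d \<noteq> 0\<close> by (simp add: ruler_def)
  qed
  have odd_level: "ruler (d * 2 ^ i) = Suc i" if "odd d" for d
    using ruler_pow2_times_odd[OF that, of i] by (simp add: mult.commute)
  show ?thesis
  proof (cases "even c")
    case True
    show ?thesis
    proof (cases "c = 0")
      case True
      then show ?thesis using odd_level[of 1] by (simp add: ruler_def)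
    qed (use True deeper[of c] odd_level[of "Suc c"] in auto)
  qed (use deeper[of "Suc c"] odd_level[of c] in auto)
qed

lemma length_ruler_string [simp]: "length (ruler_string n) = n"
  by (simp add: ruler_string_def)

lemma nth_ruler_string: "x < n \<Longrightarrow> ruler_string n ! x = ruler x"
  by (simp add: ruler_string_def)

lemma pal_at_ruler_string:
  assumes "Suc c * 2 ^ i \<le> n"
  shows "pal_at (ruler_string n) (c * 2 ^ i + 1) (2 ^ i - 1)"
proof (rule pal_atI)
  show "c * 2 ^ i + 1 + (2 ^ i - 1) \<le> length (ruler_string n)"
    using assms by (simp add: ruler_string_def)
next
  fix x y assume x: "c * 2 ^ i + 1 \<le> x" "x < c * 2 ^ i + 1 + (2 ^ i - 1)"
    and xy: "x + y + 1 = 2 * (c * 2 ^ i + 1) + (2 ^ i - 1)"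
  define r where "r = x - c * 2 ^ i"
  have r: "x = c * 2 ^ i + r" "0 < r" "r < 2 ^ i" using x by (auto simp: r_def)
  have sum: "x + y = (2 * c + 1) * 2 ^ i" using xy by (simp add: algebra_simps)
  have "\<not> 2 ^ i dvd x"
  proof
    assume "2 ^ i dvd x"
    then have "2 ^ i dvd r" using r(1) by (simp add: dvd_add_right_iff)
    then show False using r nat_dvd_not_less by blast
  qed
  then have "multiplicity 2 y = multiplicity 2 x"
    using sum by (intro multiplicity_eq_if_dvd_add[of 2 i]) simp_all
  moreover have "x < n" "y < n" "y \<noteq> 0"
    using r sum assms by (simp_all add: algebra_simps)
  ultimately show "ruler_string n ! x = ruler_string n ! y"
    using x by (simp add: nth_ruler_string ruler_def)
qed

lemma manacher_ruler_string_window: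
  assumes eq: "manacher T = manacher (ruler_string n)" and c: "Suc c * 2 ^ i < n"
  shows "pal_at T (c * 2 ^ i + 1) (2 ^ i - 1)" and "T ! (c * 2 ^ i) \<noteq> T ! (Suc c * 2 ^ i)"
proof -
  let ?S = "ruler_string n"
  have len: "length T = n" and pals: "same_pals_upto ?S T n"
    using eq[symmetric] by (metis manacher_eq_iff length_ruler_string)+
  have window: "pal_at ?S (c * 2 ^ i + 1) (2 ^ i - 1)" using c by (intro pal_at_ruler_string) simp
  have extend: "pal_at X (c * 2 ^ i) (2 ^ i - 1 + 2) \<longleftrightarrow>
      X ! (c * 2 ^ i) = X ! (Suc c * 2 ^ i) \<and> pal_at X (c * 2 ^ i + 1) (2 ^ i - 1)"
    if "length X = n" for X :: "'z list"
    using pal_at_Suc2[of X "c * 2 ^ i" "2 ^ i - 1"] that c by (simp add: algebra_simps)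
  have bound: "c * 2 ^ i + (2 ^ i - 1 + 2) \<le> n" using c by simp
  show "pal_at T (c * 2 ^ i + 1) (2 ^ i - 1)"
    using window pals bound by (simp add: same_pals_upto_def)
  show "T ! (c * 2 ^ i) \<noteq> T ! (Suc c * 2 ^ i)"
  proof
    assume "T ! (c * 2 ^ i) = T ! (Suc c * 2 ^ i)"
    then have "pal_at T (c * 2 ^ i) (2 ^ i - 1 + 2)"
      using extend[OF len] window pals bound by (simp add: same_pals_upto_def)
    then have "pal_at ?S (c * 2 ^ i) (2 ^ i - 1 + 2)"
      using pals bound by (simp add: same_pals_upto_def)
    then have "?S ! (c * 2 ^ i) = ?S ! (Suc c * 2 ^ i)" using extend[of ?S] by simp
    then show False using c ruler_window_ends_differ by (simp add: nth_ruler_string)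
  qed
qed

lemma card_set_ge_if_manacher_ruler_string:
  assumes n: "2 ^ m < n" and eq: "manacher T = manacher (ruler_string n)"
  shows "m + 2 \<le> card (set T)"
proof -
  define N :: nat where "N = 2 ^ m"
  have split: "2 ^ (m - j) * 2 ^ j = N" if "j \<le> m" for j
    using that by (simp add: N_def flip: power_add)
  have differs_from_top: "T ! (N - 2 ^ j) \<noteq> T ! N" if "j \<le> m" for j
    using manacher_ruler_string_window(2)[OF eq, of "2 ^ (m - j) - 1" j] split[OF that] n
    by (simp add: N_def diff_mult_distrib)
  have powers: "1 \<le> (2::nat) ^ i" "(2::nat) ^ i < 2 ^ j" "2 ^ j \<le> N" if "i < j" "j \<le> m" for i j
    using that by (simp_all add: N_def power_strict_increasing power_increasing)
  have below: "T ! (N - 2 ^ i) \<noteq> T ! (N - 2 ^ j)" if ij: "i < j" "j \<le> m" for i j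
  proof -
    define c :: nat where "c = 2 ^ (m - i) - 2 ^ (j - i)"
    have "2 ^ (j - i) * 2 ^ i = (2::nat) ^ j" using ij by (simp flip: power_add)
    then have c: "c * 2 ^ i = N - 2 ^ j" using split[of i] ij by (simp add: c_def diff_mult_distrib)
    have "Suc c * 2 ^ i = N - 2 ^ j + 2 ^ i" using c by simp
    also have "\<dots> < n" using powers[OF ij] n unfolding N_def by arith
    finally have "T ! (c * 2 ^ i) \<noteq> T ! (Suc c * 2 ^ i)"
      by (rule manacher_ruler_string_window(2)[OF eq])
    then have "T ! (N - 2 ^ j) \<noteq> T ! (N - 2 ^ j + 2 ^ i)" using c by (simp add: add.commute)
    moreover have "(2 ^ (m - j) - 1) * 2 ^ j = N - 2 ^ j"
      using split[of j] ij by (simp add: diff_mult_distrib)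
    then have "pal_at T (N - 2 ^ j + 1) (2 ^ j - 1)"
      using manacher_ruler_string_window(1)[OF eq, of "2 ^ (m - j) - 1" j] split[of j] ij n
      by (simp add: N_def)
    then have "T ! (N - 2 ^ j + 2 ^ i) = T ! (N - 2 ^ i)"
      by (rule pal_atD) (use powers[OF ij] in arith)+
    ultimately show ?thesis by simp
  qed
  let ?letters = "insert (T ! N) ((\<lambda>j. T ! (N - 2 ^ j)) ` {..m})"
  have "inj_on (\<lambda>j. T ! (N - 2 ^ j)) {..m}"
    by (rule inj_onI) (metis atMost_iff below linorder_neqE_nat)
  moreover have "T ! N \<notin> (\<lambda>j. T ! (N - 2 ^ j)) ` {..m}"
    using differs_from_top by force
  ultimately have "card ?letters = m + 2" by (simp add: card_image)
  moreover have "length T = n" using eq[symmetric] by (metis manacher_eq_iff length_ruler_string)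
  then have "?letters \<subseteq> set T" using n by (auto simp: N_def)
  ultimately show ?thesis using card_mono[OF List.finite_set] by metis
qed

section \<open>A greedy realisation with few letters\<close>

text \<open>For these \<open>a\<close>, whether \<open>S[a..i]\<close> is a palindrome depends only on whether \<open>S ! a = S ! i\<close>.\<close>
definition extension_positions :: "'a list \<Rightarrow> nat \<Rightarrow> nat set" where
  "extension_positions S i = {a. a < i \<and> pal_at S (a + 1) (i - 1 - a)}"

lemma extension_positions_subset: "extension_positions S i \<subseteq> {..<i}"
  by (auto simp: extension_positions_def)

lemma finite_extension_positions: "finite (extension_positions S i)"
  using extension_positions_subset finite_subset by blast

lemma letter_eq_iff_if_same_pals_upto:
  assumes pals: "same_pals_upto S T i" and "i \<le> length T"
    and "a \<in> extension_positions S i" and "b \<in> extension_positions S i"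
  shows "S ! a = S ! b \<longleftrightarrow> T ! a = T ! b"
proof -
  have same: "pal_at S j len = pal_at T j len" if "j + len \<le> i" for j len
    using pals that by (simp add: same_pals_upto_def)
  have less: "S ! a = S ! b \<longleftrightarrow> T ! a = T ! b"
    if ab: "a < b" and a: "a \<in> extension_positions S i" and b: "b \<in> extension_positions S i" for a b
  proof -
    have long: "pal_at S (a + 1) (i - 1 - a)" and short: "pal_at S (b + 1) (i - 1 - b)" and "b < i"
      using a b by (auto simp: extension_positions_def)
    define m where "m = a + i - b"
    have m: "b + m + 1 = 2 * (a + 1) + (i - 1 - a)" "a + (i - 1 - b) + 1 = m" "m < i"
      using ab \<open>b < i\<close> by (simp_all add: m_def)
    have b_in_long: "a + 1 \<le> b" "b < a + 1 + (i - 1 - a)" using ab \<open>b < i\<close> by simp_all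
    have inner: "pal_at S (a + 1) (i - 1 - b)"
      by (rule pal_at_reflect[OF long short]) (use ab \<open>b < i\<close> in auto)
    have extend: "pal_at X a (i - 1 - b + 2) \<longleftrightarrow> X ! a = X ! m"
      if "pal_at X (a + 1) (i - 1 - b)" "i \<le> length X" for X :: "'z list"
    proof -
      have "a + (i - 1 - b) + 2 \<le> length X" using m(2,3) that(2) by linarith
      then show ?thesis using pal_at_Suc2[of X a "i - 1 - b", unfolded m(2)] that by blast
    qed
    have "pal_at T (a + 1) (i - 1 - a)" "pal_at T (a + 1) (i - 1 - b)"
      using long inner same ab \<open>b < i\<close> by simp_all
    then have "T ! b = T ! m" "pal_at T a (i - 1 - b + 2) \<longleftrightarrow> T ! a = T ! m"
      using pal_atD b_in_long m(1) extend assms(2) by blast+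
    moreover have "S ! b = S ! m" "pal_at S a (i - 1 - b + 2) \<longleftrightarrow> S ! a = S ! m"
      using pal_atD[OF long] b_in_long m(1) extend[OF inner] pal_at_length[OF long] by simp_all
    moreover have "pal_at S a (i - 1 - b + 2) = pal_at T a (i - 1 - b + 2)"
      using same m by simp
    ultimately show ?thesis by simp
  qed
  show ?thesis
    using less[of a b] less[of b a] assms(3,4) by (cases a b rule: linorder_cases) auto
qed

text \<open>The longer palindrome has period \<open>a - b\<close>; reflecting \<open>a\<close> in it and then in the shorter one
  lands on \<open>2 * a - b\<close>.\<close>
lemma extension_positions_reflect:
  assumes a: "a \<in> extension_positions S i" and b: "b \<in> extension_positions S i" and "b < a"
    and close: "i - 1 - b \<le> 2 * (i - 1 - a)"
  shows "2 * a - b \<in> extension_positions S i \<and> S ! (2 * a - b) = S ! a"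
proof -
  have u: "pal_at S (a + 1) (i - 1 - a)" and v: "pal_at S (b + 1) (i - 1 - b)" and "a < i"
    using a b by (auto simp: extension_positions_def)
  define c where "c = 2 * a - b"
  have c: "c < i" "a < c" using close \<open>b < a\<close> \<open>a < i\<close> by (simp_all add: c_def)
  have "pal_at S (b + 1 + (a - b)) (i - 1 - b - 2 * (a - b))"
    using close \<open>b < a\<close> \<open>a < i\<close> by (intro pal_at_shrink[OF v]) arith
  moreover have "b + 1 + (a - b) = a + 1" "i - 1 - b - 2 * (a - b) = i - 1 - c"
    using \<open>b < a\<close> by (simp_all add: c_def)
  ultimately have inner: "pal_at S (a + 1) (i - 1 - c)" by simp
  have "pal_at S (c + 1) (i - 1 - c)"
    by (rule pal_at_reflect[OF u inner]) (use c in auto)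
  moreover have "S ! a = S ! (b + i - a)"
    by (rule pal_atD[OF v]) (use close \<open>b < a\<close> \<open>a < i\<close> in auto)
  moreover have "S ! (b + i - a) = S ! c"
    by (rule pal_atD[OF u]) (use close \<open>b < a\<close> \<open>a < i\<close> in \<open>auto simp: c_def\<close>)
  ultimately show ?thesis using c by (simp add: extension_positions_def c_def)
qed

lemma card_le_if_doubling:
  fixes X :: "nat set"
  assumes "X \<subseteq> {..<N}" "N < 2 ^ k" "\<And>x y. x \<in> X \<Longrightarrow> y \<in> X \<Longrightarrow> x < y \<Longrightarrow> 2 * x < y"
  shows "card X \<le> k"
  using assms
proof (induction k arbitrary: X N)
  case 0
  then show ?case by auto
next
  case (Suc k)
  show ?case
  proof (cases "X = {}")
    case False
    have fin: "finite X" using Suc.prems(1) finite_subset by blast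
    define M where "M = Max X"
    have M: "M \<in> X" "M < N" using fin False Suc.prems(1) by (auto simp: M_def)
    have "X - {M} \<subseteq> {..<N div 2}"
    proof
      fix x assume "x \<in> X - {M}"
      then have "2 * x < M"
        using Suc.prems(3) M fin by (simp add: M_def order.not_eq_order_implies_strict)
      then show "x \<in> {..<N div 2}" using M by simp
    qed
    then have "card (X - {M}) \<le> k"
      using Suc.prems by (intro Suc.IH[of _ "N div 2"]) auto
    then show ?thesis using M fin by (simp add: card_Diff_singleton)
  qed simp
qed

text \<open>By extension_positions_reflect, every letter occurs at a position of \<open>P\<close>, and the palindrome
  lengths \<open>i - 1 - a\<close> of the positions in \<open>P\<close> more than double from one to the next.\<close>
lemma card_letters_at_extension_positions:
  assumes "i < 2 ^ k"
  shows "card ((!) S ` extension_positions S i) \<le> k"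
proof -
  let ?E = "extension_positions S i"
  define P where "P = {a \<in> ?E. \<forall>b \<in> ?E. b < a \<longrightarrow> 2 * (i - 1 - a) < i - 1 - b}"
  have "(!) S ` ?E \<subseteq> (!) S ` P"
  proof
    fix z assume "z \<in> (!) S ` ?E"
    then obtain a where a: "a \<in> ?E" "z = S ! a" by blast
    let ?same = "{a' \<in> ?E. S ! a' = S ! a}"
    have fin: "finite ?same" by (rule finite_subset[OF _ finite_extension_positions[of S i]]) auto
    define a' where "a' = Max ?same"
    have a': "a' \<in> ?E" "S ! a' = S ! a" using Max_in[OF fin] a by (auto simp: a'_def)
    have "a' \<in> P"
    proof (rule ccontr)
      assume "a' \<notin> P"
      then obtain b where "b \<in> ?E" "b < a'" "i - 1 - b \<le> 2 * (i - 1 - a')"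
        using a' by (auto simp: P_def not_less)
      then have "2 * a' - b \<in> ?same" using extension_positions_reflect a' by auto
      then have "2 * a' - b \<le> a'" using Max_ge[OF fin] by (simp add: a'_def)
      then show False using \<open>b < a'\<close> by simp
    qed
    then show "z \<in> (!) S ` P" using a a' by (metis image_eqI)
  qed
  moreover have finP: "finite P"
    by (rule finite_subset[OF _ finite_extension_positions[of S i]]) (auto simp: P_def)
  ultimately have "card ((!) S ` ?E) \<le> card ((!) S ` P)" by (intro card_mono) simp_all
  also have "\<dots> \<le> card P" by (rule card_image_le[OF finP])
  also have "card P = card ((\<lambda>a. i - 1 - a) ` P)"
    by (rule card_image[symmetric]) (auto simp: inj_on_def P_def extension_positions_def)
  also have "\<dots> \<le> k"
  proof (rule card_le_if_doubling[OF _ assms])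
    show "(\<lambda>a. i - 1 - a) ` P \<subseteq> {..<i}" by (auto simp: P_def extension_positions_def)
    fix x y assume "x \<in> (\<lambda>a. i - 1 - a) ` P" "y \<in> (\<lambda>a. i - 1 - a) ` P" "x < y"
    then show "2 * x < y" by (auto simp: P_def extension_positions_def)
  qed
  finally show ?thesis .
qed

lemma Least_not_in_le_card:
  fixes U :: "nat set"
  assumes "finite U"
  shows "(LEAST c. c \<notin> U) \<le> card U"
proof (rule ccontr)
  assume big: "\<not> (LEAST c. c \<notin> U) \<le> card U"
  have "{..card U} \<subseteq> U"
  proof
    fix c assume "c \<in> {..card U}"
    then have "c < (LEAST c. c \<notin> U)" using big by simp
    then show "c \<in> U" using not_less_Least by blast
  qed
  then have "card {..card U} \<le> card U" by (rule card_mono[OF assms])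
  then show False by simp
qed

lemma card_image_le_if_factors:
  assumes "finite A" and factors: "\<And>a b. a \<in> A \<Longrightarrow> b \<in> A \<Longrightarrow> f a = f b \<Longrightarrow> g a = g b"
  shows "card (g ` A) \<le> card (f ` A)"
proof -
  have "(\<lambda>y. g (inv_into A f y)) ` f ` A = g ` A"
    unfolding image_image
    by (rule image_cong[OF refl], rule factors) (simp_all add: inv_into_into f_inv_into_f)
  then show ?thesis using card_image_le[of "f ` A" "\<lambda>y. g (inv_into A f y)"] assms(1) by simp
qed

definition next_letter :: "'a list \<Rightarrow> nat list \<Rightarrow> nat \<Rightarrow> nat" where
  "next_letter S T i = (LEAST c. \<forall>a \<in> extension_positions S i. S ! a = S ! i \<longleftrightarrow> T ! a = c)"

lemma next_letter_spec:
  assumes "same_pals_upto S T i" "i \<le> length T" "a \<in> extension_positions S i"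
  shows "S ! a = S ! i \<longleftrightarrow> T ! a = next_letter S T i"
proof -
  let ?E = "extension_positions S i"
  have ex: "\<exists>c. \<forall>a \<in> ?E. S ! a = S ! i \<longleftrightarrow> T ! a = c"
  proof (cases "\<exists>a0 \<in> ?E. S ! a0 = S ! i")
    case True
    then obtain a0 where "a0 \<in> ?E" "S ! a0 = S ! i" by blast
    then show ?thesis using letter_eq_iff_if_same_pals_upto[OF assms(1,2)] by metis
  next
    case False
    obtain c where "c \<notin> (!) T ` ?E"
      using ex_new_if_finite[OF infinite_UNIV_nat] finite_extension_positions by blast
    then show ?thesis using False by (intro exI[of _ c]) force
  qed
  have "\<forall>a \<in> ?E. S ! a = S ! i \<longleftrightarrow> T ! a = next_letter S T i"
    unfolding next_letter_def by (rule LeastI_ex[OF ex])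
  then show ?thesis using assms(3) by (rule bspec)
qed

lemma next_letter_le:
  assumes pals: "same_pals_upto S T i" and "i \<le> length T" and "i < 2 ^ k" and "set T \<subseteq> {..k}"
  shows "next_letter S T i \<le> k"
proof (cases "\<exists>a0 \<in> extension_positions S i. S ! a0 = S ! i")
  case True
  then obtain a0 where a0: "a0 \<in> extension_positions S i" "S ! a0 = S ! i" by blast
  then have "next_letter S T i = T ! a0" using next_letter_spec[OF pals assms(2)] by metis
  moreover have "a0 < length T" using a0 assms(2) extension_positions_subset by fastforce
  ultimately show ?thesis using assms(4) nth_mem by fastforce
next
  case False
  let ?E = "extension_positions S i"
  define c0 where "c0 = (LEAST c. c \<notin> (!) T ` ?E)"
  have "c0 \<notin> (!) T ` ?E"
    unfolding c0_def
    by (rule LeastI_ex, rule ex_new_if_finite[OF infinite_UNIV_nat])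
      (simp add: finite_extension_positions)
  then have "next_letter S T i \<le> c0" using False unfolding next_letter_def by (intro Least_le) blast
  also have "c0 \<le> card ((!) T ` ?E)"
    unfolding c0_def by (simp add: Least_not_in_le_card finite_extension_positions)
  also have "\<dots> \<le> card ((!) S ` ?E)"
  proof (rule card_image_le_if_factors[OF finite_extension_positions])
    fix a b assume "a \<in> ?E" "b \<in> ?E" "S ! a = S ! b"
    then show "T ! a = T ! b" using letter_eq_iff_if_same_pals_upto[OF pals assms(2)] by simp
  qed
  also have "\<dots> \<le> k" using card_letters_at_extension_positions assms(3) .
  finally show ?thesis .
qed

lemma same_pals_upto_snoc:
  assumes pals: "same_pals_upto S T i" and "i < length S" and lenT: "length T = i"
    and c: "\<And>a. a \<in> extension_positions S i \<Longrightarrow> S ! a = S ! i \<longleftrightarrow> T ! a = c"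
  shows "same_pals_upto S (T @ [c]) (Suc i)"
  unfolding same_pals_upto_def
proof (intro allI impI)
  fix j len assume "j + len \<le> Suc i"
  then consider "j + len \<le> i" | "len \<le> 1" "j + len = Suc i" | "2 \<le> len" "j + len = Suc i"
    by linarith
  then show "pal_at S j len = pal_at (T @ [c]) j len"
  proof cases
    case 1
    then show ?thesis using pals lenT by (simp add: same_pals_upto_def pal_at_append)
  next
    case 2
    then show ?thesis using assms(2) lenT by (simp add: pal_at_short)
  next
    case 3
    define l where "l = len - 2"
    have l: "len = l + 2" "j + l + 1 = i" using 3 by (simp_all add: l_def)
    have inner: "pal_at (T @ [c]) (j + 1) l = pal_at S (j + 1) l"
      using l pals lenT by (simp add: same_pals_upto_def pal_at_append)
    have S_ext: "pal_at S j len \<longleftrightarrow> S ! j = S ! i \<and> pal_at S (j + 1) l"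
      using pal_at_Suc2[of S j l] l assms(2) by simp
    have T_ext: "pal_at (T @ [c]) j len \<longleftrightarrow> T ! j = c \<and> pal_at (T @ [c]) (j + 1) l"
      using pal_at_Suc2[of "T @ [c]" j l] l lenT by (simp add: nth_append)
    show ?thesis
    proof (cases "pal_at S (j + 1) l")
      case True
      moreover have "j < i" "i - 1 - j = l" using l by simp_all
      ultimately have "j \<in> extension_positions S i" by (simp add: extension_positions_def)
      then show ?thesis unfolding S_ext T_ext inner using True c by presburger
    qed (use S_ext T_ext inner in simp)
  qed
qed

primrec greedy_string :: "'a list \<Rightarrow> nat \<Rightarrow> nat list" where
  "greedy_string S 0 = []"
| "greedy_string S (Suc i) = greedy_string S i @ [next_letter S (greedy_string S i) i]"

lemma length_greedy_string [simp]: "length (greedy_string S i) = i"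
  by (induction i) auto

lemma same_pals_upto_greedy_string: "i \<le> length S \<Longrightarrow> same_pals_upto S (greedy_string S i) i"
proof (induction i)
  case 0
  then show ?case by (simp add: same_pals_upto_def pal_at_short)
next
  case (Suc i)
  then have pals: "same_pals_upto S (greedy_string S i) i" by simp
  have "same_pals_upto S (greedy_string S i @ [next_letter S (greedy_string S i) i]) (Suc i)"
  proof (rule same_pals_upto_snoc[OF pals])
    show "i < length S" using Suc.prems by simp
    fix a assume "a \<in> extension_positions S i"
    then show "S ! a = S ! i \<longleftrightarrow> greedy_string S i ! a = next_letter S (greedy_string S i) i"
      by (intro next_letter_spec[OF pals]) simp_all
  qed simp
  then show ?case by simp
qed

lemma set_greedy_string_le: "i \<le> length S \<Longrightarrow> i \<le> 2 ^ k \<Longrightarrow> set (greedy_string S i) \<subseteq> {..k}"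
proof (induction i)
  case (Suc i)
  have "next_letter S (greedy_string S i) i \<le> k"
  proof (rule next_letter_le)
    show "same_pals_upto S (greedy_string S i) i"
      using Suc.prems by (intro same_pals_upto_greedy_string) simp
    show "i < 2 ^ k" "set (greedy_string S i) \<subseteq> {..k}" using Suc by simp_all
  qed simp
  then show ?case using Suc by simp
qed simp

theorem ex_manacher_eq_card_set_le:
  fixes S :: "'a list"
  assumes "length S \<le> 2 ^ k"
  shows "\<exists>T :: nat list. manacher T = manacher S \<and> card (set T) \<le> k + 1"
proof (intro exI conjI)
  let ?T = "greedy_string S (length S)"
  have "manacher S = manacher ?T"
    using same_pals_upto_greedy_string[of "length S" S] by (simp add: manacher_eq_iff)
  then show "manacher ?T = manacher S" ..
  have "card (set ?T) \<le> card {..k}"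
    using set_greedy_string_le[OF _ assms] by (intro card_mono) auto
  then show "card (set ?T) \<le> k + 1" by simp
qed

section \<open>The values of alpha\<close>

lemma alpha_1: "alpha 1 = 1"
  unfolding alpha_def
proof (rule Least_equality)
  have "manacher T \<noteq> manacher [0::nat]" if "card (set T) < 1" for T :: "nat list"
    using that by (simp add: manacher_def)
  then show "\<exists>S::nat list. length S = 1 \<and>
      \<not> (\<exists>T::nat list. card (set T) < 1 \<and> manacher T = manacher S)"
    by (intro exI[of _ "[0]"]) auto
next
  fix n
  assume "\<exists>S::nat list. length S = n \<and> \<not> (\<exists>T::nat list. card (set T) < 1 \<and> manacher T = manacher S)"
  then show "1 \<le> n" by (metis card.empty less_one list.set(1) not_less length_0_conv)
qed

lemma alpha_eq:
  assumes "2 \<le> k"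
  shows "alpha k = 2 ^ (k - 2) + 1"
  unfolding alpha_def
proof (rule Least_equality)
  let ?S = "ruler_string (2 ^ (k - 2) + 1)"
  have "k \<le> card (set T)" if "manacher T = manacher ?S" for T :: "nat list"
    using card_set_ge_if_manacher_ruler_string[OF _ that, of "k - 2"] assms by simp
  then show "\<exists>S::nat list. length S = 2 ^ (k - 2) + 1 \<and>
      \<not> (\<exists>T::nat list. card (set T) < k \<and> manacher T = manacher S)"
    by (intro exI[of _ ?S]) force
next
  fix n
  assume "\<exists>S::nat list. length S = n \<and> \<not> (\<exists>T::nat list. card (set T) < k \<and> manacher T = manacher S)"
  then obtain S :: "nat list" where "length S = n"
    and "\<And>T :: nat list. manacher T = manacher S \<Longrightarrow> k \<le> card (set T)"
    by (auto simp: not_less)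
  then show "2 ^ (k - 2) + 1 \<le> n"
    using ex_manacher_eq_card_set_le[of S "k - 2"] assms by fastforce
qed

lemma floor_log2_minus_1_bounds:
  assumes "2 \<le> n"
  obtains m where "\<lfloor>log 2 (real (n - 1))\<rfloor> = int m" "2 ^ m < n" "n \<le> 2 ^ Suc m"
proof -
  define m where "m = nat \<lfloor>log 2 (real (n - 1))\<rfloor>"
  have m: "\<lfloor>log 2 (real (n - 1))\<rfloor> = int m" using assms by (simp add: m_def)
  then have "2 ^ m \<le> n - 1 \<and> n - 1 < 2 ^ Suc m"
    using floor_log_nat_eq_powr_iff[of 2 "n - 1" m] assms by simp
  then show ?thesis using that m by auto
qed

theorem corollary5p2:
  shows "alpha 1 = 1 \<and> (\<forall>k\<ge>2. alpha k = 2 ^ (k - 2) + 1)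
    \<and> (\<forall>n::nat\<ge>2.
         (\<forall>S::nat list. length S = n \<longrightarrow>
            (\<exists>T::nat list. manacher T = manacher S \<and>
               int (card (set T)) \<le> \<lfloor>log 2 (real (n - 1))\<rfloor> + 2))
       \<and> (\<exists>S::nat list. length S = n \<and>
            (\<forall>T::nat list. manacher T = manacher S \<longrightarrow>
               int (card (set T)) \<ge> \<lfloor>log 2 (real (n - 1))\<rfloor> + 2)))"
proof (intro conjI allI impI)
  show "alpha 1 = 1" by (rule alpha_1)
  show "alpha k = 2 ^ (k - 2) + 1" if "2 \<le> k" for k using that by (rule alpha_eq)
next
  fix n :: nat and S :: "nat list" assume "2 \<le> n" "length S = n"
  obtain m where m: "\<lfloor>log 2 (real (n - 1))\<rfloor> = int m" and "n \<le> 2 ^ Suc m"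
    using floor_log2_minus_1_bounds[OF \<open>2 \<le> n\<close>] by blast
  then obtain T :: "nat list" where "manacher T = manacher S" "card (set T) \<le> Suc m + 1"
    using ex_manacher_eq_card_set_le[of S "Suc m"] \<open>length S = n\<close> by auto
  then show "\<exists>T::nat list. manacher T = manacher S \<and>
      int (card (set T)) \<le> \<lfloor>log 2 (real (n - 1))\<rfloor> + 2"
    using m by (intro exI[of _ T]) simp
next
  fix n :: nat assume "2 \<le> n"
  then obtain m where m: "\<lfloor>log 2 (real (n - 1))\<rfloor> = int m" and "2 ^ m < n"
    using floor_log2_minus_1_bounds by blast
  have "int m + 2 \<le> int (card (set T))"
    if "manacher T = manacher (ruler_string n)" for T :: "nat list"
    using card_set_ge_if_manacher_ruler_string[OF \<open>2 ^ m < n\<close> that] by linarith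
  then show "\<exists>S::nat list. length S = n \<and> (\<forall>T::nat list. manacher T = manacher S \<longrightarrow>
      int (card (set T)) \<ge> \<lfloor>log 2 (real (n - 1))\<rfloor> + 2)"
    using m by (intro exI[of _ "ruler_string n"]) simp
qed

end
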